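(* Let $\mathcal{H}=(V,E)$ be a linear hypergraph without loop with $n$ vertices, and suppose $E$ can be partitioned as $E=E'\sqcup E''$ such that, with $\mathcal{H}'=(V,E')$: (i) $\mathrm{ar}(\mathcal{H}')\ge\sqrt{n}$; (ii) $|e|<\sqrt{n}$ for every $e\in E''$; (iii) for every $e\in E''$ there exists $x_0\in e$ with $\mathrm{deg}_{\mathcal{H}}(x_0)\le |e|$. Then $\mathrm{q}(\mathcal{H})\le \Delta([\mathcal{H}]_2)+1$.
   Context: A hypergraph $\mathcal{H}=(V,E)$ has a finite vertex set $V$ and a finite set $E$ of nonempty subsets of $V$ (hyperedges); a loop is a hyperedge with one element; linear means distinct hyperedges share at most one vertex. $\mathrm{deg}_{\mathcal{H}}(x)$ is the number of hyperedges containing $x$. The antirank $\mathrm{ar}$ is the minimum cardinality of a hyperedge ($\infty$ if there are none). The 2-section $[\mathcal{H}]_2$ is the simple graph on $V$ where distinct vertices are adjacent iff some hyperedge contains both; $\Delta([\mathcal{H}]_2)$ is its maximum degree. The chromatic index $\mathrm{q}(\mathcal{H})$ is the least number of colors in a coloring of hyperedges where distinct intersecting hyperedges get different colors. *)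

theory Defs
  imports "HOL-Analysis.Analysis"
begin

definition hypergraph :: "'a set \<Rightarrow> 'a set set \<Rightarrow> bool" where
  "hypergraph V E \<longleftrightarrow> finite V \<and> finite E \<and> (\<forall>e\<in>E. e \<noteq> {} \<and> e \<subseteq> V)"

definition linear_hg :: "'a set set \<Rightarrow> bool" where
  "linear_hg E \<longleftrightarrow> (\<forall>e\<in>E. \<forall>f\<in>E. e \<noteq> f \<longrightarrow> card (e \<inter> f) \<le> 1)"

definition loopless :: "'a set set \<Rightarrow> bool" where
  "loopless E \<longleftrightarrow> (\<forall>e\<in>E. card e \<noteq> 1)"

definition hdeg :: "'a set set \<Rightarrow> 'a \<Rightarrow> nat" where
  "hdeg E x = card {e\<in>E. x \<in> e}"

definition antirank :: "'a set set \<Rightarrow> ereal" where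
  "antirank E = (if E = {} then \<infinity> else ereal (real (Min (card ` E))))"

definition sec2_adj :: "'a set set \<Rightarrow> 'a \<Rightarrow> 'a \<Rightarrow> bool" where
  "sec2_adj E x y \<longleftrightarrow> x \<noteq> y \<and> (\<exists>e\<in>E. x \<in> e \<and> y \<in> e)"

definition sec2_deg :: "'a set \<Rightarrow> 'a set set \<Rightarrow> 'a \<Rightarrow> nat" where
  "sec2_deg V E x = card {y\<in>V. sec2_adj E x y}"

definition sec2_maxdeg :: "'a set \<Rightarrow> 'a set set \<Rightarrow> nat" where
  "sec2_maxdeg V E = (if V = {} then 0 else Max (sec2_deg V E ` V))"

definition proper_edge_colouring :: "'a set set \<Rightarrow> ('a set \<Rightarrow> nat) \<Rightarrow> nat \<Rightarrow> bool" where
  "proper_edge_colouring E c k \<longleftrightarrow>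
     (\<forall>e\<in>E. c e < k) \<and>
     (\<forall>e\<in>E. \<forall>f\<in>E. e \<noteq> f \<and> e \<inter> f \<noteq> {} \<longrightarrow> c e \<noteq> c f)"

definition chromatic_index :: "'a set set \<Rightarrow> nat" where
  "chromatic_index E = (LEAST k. \<exists>c. proper_edge_colouring E c k)"

end

theory Submission
  imports Defs
begin

(* Induction on the number of edges: remove an edge e of minimum size s, colour the others
   with Delta + 1 colours and look for a free colour for e.  By linearity the 2-section degree
   of a vertex y is the sum of |g| - 1 over the edges g through y, so deg y * (s - 1) <= Delta,
   while e meets exactly the sum over y in e of (deg y - 1) other edges.  If some x0 in e has
   deg x0 <= s, this count is at most Delta.  Otherwise s^2 >= n, and if e still meets more
   than Delta edges then every estimate is tight: Delta = n - 1 = s^2 - 1, all edges have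
   size s, and every vertex of e lies on s + 1 edges and is adjacent to all other vertices.
   In this rigid configuration two disjoint edges through e can share a colour, which leaves
   room for e when the remaining edges are coloured greedily in a suitable order. *)

definition star :: "'a set set \<Rightarrow> 'a \<Rightarrow> 'a set set" where
  "star F y = {g\<in>F. y \<in> g}"

definition edge_nbrs :: "'a set set \<Rightarrow> 'a set \<Rightarrow> 'a set set" where
  "edge_nbrs F e = {g\<in>F. g \<noteq> e \<and> g \<inter> e \<noteq> {}}"

lemma hdeg_eq_card_star: "hdeg F y = card (star F y)"
  by (simp add: hdeg_def star_def)

lemma edge_nbrs_Diff: "edge_nbrs (F - {e}) g = edge_nbrs F g - {e}"
  by (auto simp: edge_nbrs_def)

lemma edge_nbrs_mono: "G \<subseteq> F \<Longrightarrow> edge_nbrs G p \<subseteq> edge_nbrs F p"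
  by (auto simp: edge_nbrs_def)

lemma proper_edge_colouring_insert:
  assumes c: "proper_edge_colouring G c D" and "finite G" "e \<notin> G"
    and free: "card (c ` edge_nbrs (insert e G) e) < D"
  obtains c' where "proper_edge_colouring (insert e G) c' D" "\<forall>f\<in>G. c' f = c f"
proof -
  have "\<not> {..<D} \<subseteq> c ` edge_nbrs (insert e G) e"
    using free card_mono[of "c ` edge_nbrs (insert e G) e" "{..<D}"] \<open>finite G\<close>
    by (auto simp: edge_nbrs_def)
  then obtain d where "d < D" "d \<notin> c ` edge_nbrs (insert e G) e" by auto
  then have "proper_edge_colouring (insert e G) (c(e := d)) D"
    using c \<open>e \<notin> G\<close> by (auto simp: proper_edge_colouring_def edge_nbrs_def Int_commute)
  then show ?thesis using that \<open>e \<notin> G\<close> by simp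
qed

lemma proper_edge_colouring_Diff_extend:
  assumes "proper_edge_colouring (F - {e}) c D" "finite F" "e \<in> F"
    and "card (c ` edge_nbrs F e) < D"
  obtains c' where "proper_edge_colouring F c' D"
proof -
  have F_eq: "insert e (F - {e}) = F"
    using assms(3) by blast
  have "finite (F - {e})"
    using assms(2) by (rule finite_Diff)
  moreover have "e \<notin> F - {e}"
    by simp
  moreover have "card (c ` edge_nbrs (insert e (F - {e})) e) < D"
    unfolding F_eq by (rule assms(4))
  ultimately show ?thesis
  proof (rule proper_edge_colouring_insert[OF assms(1)])
    fix c' assume "proper_edge_colouring (insert e (F - {e})) c' D"
    then show ?thesis
      unfolding F_eq by (rule that)
  qed
qed

lemma proper_edge_colouring_extend:
  assumes "finite S" "proper_edge_colouring G c D" "finite G"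
    and sparse: "\<forall>e\<in>S. card (edge_nbrs (G \<union> S) e) < D"
  obtains c' where "proper_edge_colouring (G \<union> S) c' D" "\<forall>f\<in>G. c' f = c f"
  using assms
proof (induction S arbitrary: thesis rule: finite_induct)
  case empty
  then show ?case by auto
next
  case (insert e S)
  have sparse_S: "\<forall>f\<in>S. card (edge_nbrs (G \<union> S) f) < D"
  proof
    fix f assume "f \<in> S"
    have "card (edge_nbrs (G \<union> S) f) \<le> card (edge_nbrs (G \<union> insert e S) f)"
      using insert.hyps(1) \<open>finite G\<close> by (intro card_mono) (auto simp: edge_nbrs_def)
    also have "\<dots> < D" using insert.prems(4) \<open>f \<in> S\<close> by simp
    finally show "card (edge_nbrs (G \<union> S) f) < D" .
  qed
  then obtain c1 where c1: "proper_edge_colouring (G \<union> S) c1 D" "\<forall>f\<in>G. c1 f = c f"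
    using insert.IH[OF _ insert.prems(2,3) sparse_S] by blast
  show ?case
  proof (cases "e \<in> G")
    case True
    then show ?thesis using insert.prems(1) c1 by (simp add: insert_absorb)
  next
    case False
    have "card (c1 ` edge_nbrs (insert e (G \<union> S)) e) \<le> card (edge_nbrs (insert e (G \<union> S)) e)"
      using insert.hyps(1) \<open>finite G\<close> by (intro card_image_le) (auto simp: edge_nbrs_def)
    also have "\<dots> < D" using insert.prems(4) by simp
    finally obtain c2 where "proper_edge_colouring (insert e (G \<union> S)) c2 D"
        "\<forall>f\<in>G \<union> S. c2 f = c1 f"
      using proper_edge_colouring_insert[OF c1(1)] insert.hyps(1,2) \<open>finite G\<close> False by blast
    then show ?thesis using insert.prems(1) c1(2) by simp
  qed
qed

locale linear_hypergraph =
  fixes V :: "'a set" and E :: "'a set set"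
  assumes hypergraph: "hypergraph V E" and linear: "linear_hg E" and loopless: "loopless E"
begin

abbreviation \<Delta> :: nat where "\<Delta> \<equiv> sec2_maxdeg V E"

lemma finite_V: "finite V" and finite_E: "finite E" and edge_subset: "e \<in> E \<Longrightarrow> e \<subseteq> V"
  using hypergraph by (auto simp: hypergraph_def)

lemma finite_edge: "e \<in> E \<Longrightarrow> finite e"
  using edge_subset finite_V finite_subset by blast

lemma card_edge_ge_2: "e \<in> E \<Longrightarrow> 2 \<le> card e"
proof -
  assume "e \<in> E"
  then have "card e \<noteq> 0" "card e \<noteq> 1"
    using hypergraph loopless finite_edge by (auto simp: hypergraph_def loopless_def)
  then show ?thesis by linarith
qed

lemma edges_eq_if_two_common:
  assumes "e \<in> E" "f \<in> E" "x \<in> e" "x \<in> f" "y \<in> e" "y \<in> f" "x \<noteq> y"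
  shows "e = f"
proof (rule ccontr)
  assume "e \<noteq> f"
  have "card {x, y} \<le> card (e \<inter> f)"
    using assms finite_edge by (intro card_mono) auto
  moreover have "card (e \<inter> f) \<le> 1"
    using linear assms(1,2) \<open>e \<noteq> f\<close> unfolding linear_hg_def by blast
  ultimately show False using \<open>x \<noteq> y\<close> by simp
qed

lemma finite_star: "F \<subseteq> E \<Longrightarrow> finite (star F y)"
  using finite_E by (auto simp: star_def intro: finite_subset)

lemma finite_edge_nbrs: "F \<subseteq> E \<Longrightarrow> finite (edge_nbrs F p)"
  using finite_E by (auto simp: edge_nbrs_def intro: finite_subset)

lemma sec2_deg_eq_sum:
  assumes "F \<subseteq> E"
  shows "sec2_deg V F y = (\<Sum>g\<in>star F y. card g - 1)"
proof -
  have "{z\<in>V. sec2_adj F y z} = (\<Union>g\<in>star F y. g - {y})"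
    using assms edge_subset by (auto simp: sec2_adj_def star_def)
  then have "sec2_deg V F y = (\<Sum>g\<in>star F y. card (g - {y}))"
    unfolding sec2_deg_def
  proof (simp only:, intro card_UN_disjoint)
    show "finite (star F y)" using assms by (rule finite_star)
    show "\<forall>g\<in>star F y. finite (g - {y})"
      using assms finite_edge by (auto simp: star_def)
    show "\<forall>g\<in>star F y. \<forall>h\<in>star F y. g \<noteq> h \<longrightarrow> (g - {y}) \<inter> (h - {y}) = {}"
      using assms edges_eq_if_two_common unfolding star_def by blast
  qed
  also have "\<dots> = (\<Sum>g\<in>star F y. card g - 1)"
    using assms finite_edge by (intro sum.cong) (auto simp: star_def)
  finally show ?thesis .
qed

lemma sec2_deg_le_maxdeg:
  assumes "F \<subseteq> E" "y \<in> V"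
  shows "sec2_deg V F y \<le> \<Delta>"
proof -
  have "sec2_deg V F y \<le> sec2_deg V E y"
    unfolding sec2_deg_def using assms(1) finite_V by (intro card_mono) (auto simp: sec2_adj_def)
  also have "\<dots> \<le> \<Delta>"
    using assms(2) finite_V by (auto simp: sec2_maxdeg_def)
  finally show ?thesis .
qed

lemma maxdeg_less_card_V:
  assumes "V \<noteq> {}"
  shows "\<Delta> < card V"
proof -
  have "\<Delta> \<in> sec2_deg V E ` V"
    using assms finite_V by (simp add: sec2_maxdeg_def)
  then obtain y where "y \<in> V" "\<Delta> = sec2_deg V E y" by blast
  moreover have "sec2_deg V E y \<le> card (V - {y})"
    unfolding sec2_deg_def using finite_V by (intro card_mono) (auto simp: sec2_adj_def)
  ultimately show ?thesis
    using finite_V by (metis card_Diff1_less le_less_trans)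
qed

lemma card_edge_nbrs_add_card:
  assumes "F \<subseteq> E" "e \<in> F"
  shows "card (edge_nbrs F e) + card e = (\<Sum>y\<in>e. hdeg F y)"
proof -
  have "edge_nbrs F e = (\<Union>y\<in>e. star F y - {e})"
    by (auto simp: edge_nbrs_def star_def)
  then have "card (edge_nbrs F e) = (\<Sum>y\<in>e. card (star F y - {e}))"
  proof (simp only:, intro card_UN_disjoint)
    show "finite e" using assms finite_edge by blast
    show "\<forall>y\<in>e. finite (star F y - {e})" using assms(1) finite_star by blast
    show "\<forall>y\<in>e. \<forall>z\<in>e. y \<noteq> z \<longrightarrow> (star F y - {e}) \<inter> (star F z - {e}) = {}"
      using assms edges_eq_if_two_common unfolding star_def by blast
  qed
  have "(\<Sum>y\<in>e. hdeg F y) = (\<Sum>y\<in>e. card (star F y - {e}) + 1)"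
    using assms finite_star card.remove[of "star F _" e]
    by (intro sum.cong) (auto simp: hdeg_eq_card_star star_def)
  also have "\<dots> = card (edge_nbrs F e) + card e"
    unfolding sum.distrib \<open>card (edge_nbrs F e) = _\<close> by simp
  finally show ?thesis ..
qed

lemma hdeg_mult_le_sec2_deg:
  assumes "F \<subseteq> E" "\<forall>g\<in>F. s \<le> card g"
  shows "hdeg F y * (s - 1) \<le> sec2_deg V F y"
proof -
  have "hdeg F y * (s - 1) = (\<Sum>g\<in>star F y. s - 1)"
    by (simp add: hdeg_eq_card_star)
  also have "\<dots> \<le> (\<Sum>g\<in>star F y. card g - 1)"
    using assms by (intro sum_mono) (auto simp: star_def)
  finally show ?thesis using sec2_deg_eq_sum[OF assms(1)] by simp
qed

lemma hdeg_mult_le_maxdeg: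
  assumes "F \<subseteq> E" "\<forall>g\<in>F. s \<le> card g" "y \<in> V"
  shows "hdeg F y * (s - 1) \<le> \<Delta>"
  using hdeg_mult_le_sec2_deg[OF assms(1,2)] sec2_deg_le_maxdeg[OF assms(1,3)] by (rule le_trans)

lemma hdeg_mono: "F \<subseteq> E \<Longrightarrow> hdeg F x \<le> hdeg E x"
  unfolding hdeg_eq_card_star using finite_star[of E x] by (intro card_mono) (auto simp: star_def)

lemma card_edge_nbrs_le_maxdeg:
  assumes F: "F \<subseteq> E" "e \<in> F" and min: "\<forall>g\<in>F. card e \<le> card g"
    and x0: "x0 \<in> e" "hdeg F x0 \<le> card e"
  shows "card (edge_nbrs F e) \<le> \<Delta>"
proof -
  have e: "finite e" "e \<subseteq> V" "2 \<le> card e"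
    using F finite_edge edge_subset card_edge_ge_2 by auto
  have "(\<Sum>y\<in>e - {x0}. hdeg F y) * (card e - 1) = (\<Sum>y\<in>e - {x0}. hdeg F y * (card e - 1))"
    by (simp add: sum_distrib_right)
  also have "\<dots> \<le> (\<Sum>y\<in>e - {x0}. \<Delta>)"
    using hdeg_mult_le_maxdeg[OF F(1) min] e(2) by (intro sum_mono) auto
  also have "\<dots> = \<Delta> * (card e - 1)"
    using e(1) x0(1) by simp
  finally have "(\<Sum>y\<in>e - {x0}. hdeg F y) \<le> \<Delta>"
    using e(3) by simp
  moreover have "card (edge_nbrs F e) + card e = hdeg F x0 + (\<Sum>y\<in>e - {x0}. hdeg F y)"
    using card_edge_nbrs_add_card[OF F] sum.remove[OF e(1) x0(1)] by simp
  ultimately show ?thesis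
    using x0(2) by linarith
qed

lemma crowded_edge_parameters:
  assumes F: "F \<subseteq> E" "e \<in> F" and min: "\<forall>g\<in>F. card e \<le> card g"
    and small_V: "card V \<le> card e * card e" and crowded: "\<Delta> < card (edge_nbrs F e)"
  shows "\<Delta> + 1 = card e * card e" "card V = card e * card e"
proof -
  define s where "s = card e"
  have e: "e \<subseteq> V" "2 \<le> s"
    using F edge_subset card_edge_ge_2 by (auto simp: s_def)
  have "(s - 1) * (\<Delta> + 1 + s) \<le> (s - 1) * (card (edge_nbrs F e) + s)"
    using crowded by (intro mult_le_mono2) simp
  also have "\<dots> = (\<Sum>y\<in>e. hdeg F y * (s - 1))"
    using card_edge_nbrs_add_card[OF F] by (simp add: s_def sum_distrib_right mult.commute)
  also have "\<dots> \<le> (\<Sum>y\<in>e. \<Delta>)"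
    using hdeg_mult_le_maxdeg[OF F(1)] min e(1) by (intro sum_mono) (auto simp: s_def)
  also have "\<dots> = s * \<Delta>"
    by (simp add: s_def)
  finally have "(s - 1) * (\<Delta> + 1 + s) \<le> s * \<Delta>" .
  moreover obtain r where "s = Suc r"
    using e(2) by (cases s) auto
  ultimately have "s * s \<le> \<Delta> + 1"
    by (simp add: algebra_simps)
  moreover have "\<Delta> < card V"
    using e maxdeg_less_card_V s_def by fastforce
  ultimately show "\<Delta> + 1 = card e * card e" "card V = card e * card e"
    using small_V by (simp_all add: s_def)
qed

lemma hdeg_le_Suc_if_maxdeg_eq:
  assumes "F \<subseteq> E" "\<forall>g\<in>F. s \<le> card g" "2 \<le> s" "\<Delta> + 1 = s * s" "y \<in> V"
  shows "hdeg F y \<le> s + 1"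
proof -
  obtain r where r: "s = Suc r" "1 \<le> r"
    using assms(3) by (cases s) auto
  have "hdeg F y * r \<le> (s + 1) * r"
    using hdeg_mult_le_maxdeg[OF assms(1,2,5)] assms(4) r(1) by (simp add: algebra_simps)
  then show ?thesis
    using r(2) by (simp only: mult_le_cancel2)
qed

lemma card_edge_nbrs_le_square:
  assumes F: "F \<subseteq> E" "\<forall>g\<in>F. s \<le> card g" and maxdeg: "\<Delta> + 1 = s * s"
    and f: "f \<in> F" "card f = s"
  shows "card (edge_nbrs F f) \<le> s * s"
proof -
  have "2 \<le> s" "f \<subseteq> V"
    using F(1) f card_edge_ge_2 edge_subset by auto
  have "card (edge_nbrs F f) + s = (\<Sum>y\<in>f. hdeg F y)"
    using card_edge_nbrs_add_card[OF F(1) f(1)] f(2) by simp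
  also have "\<dots> \<le> (\<Sum>y\<in>f. s + 1)"
    using hdeg_le_Suc_if_maxdeg_eq[OF F \<open>2 \<le> s\<close> maxdeg] \<open>f \<subseteq> V\<close>
    by (intro sum_mono) auto
  also have "\<dots> = s * s + s"
    using f(2) by simp
  finally show ?thesis by simp
qed

lemma hdeg_eq_Suc_if_full_edge:
  assumes F: "F \<subseteq> E" "\<forall>g\<in>F. s \<le> card g" and maxdeg: "\<Delta> + 1 = s * s"
    and f: "f \<in> F" "card f = s" "card (edge_nbrs F f) = s * s" and y: "y \<in> f"
  shows "hdeg F y = s + 1"
proof -
  have "f \<in> E"
    using F(1) f(1) by blast
  then have "2 \<le> s" "finite f" "f \<subseteq> V"
    using f(2) card_edge_ge_2 finite_edge edge_subset by auto
  then have hdeg_le: "\<And>x. x \<in> f \<Longrightarrow> hdeg F x \<le> s + 1"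
    using hdeg_le_Suc_if_maxdeg_eq[OF F _ maxdeg] by blast
  have "(\<Sum>x\<in>f. hdeg F x) = (\<Sum>x\<in>f. s + 1)"
    using card_edge_nbrs_add_card[OF F(1) f(1)] f(2,3) by simp
  then show ?thesis
    using sum_mono_inv[of "hdeg F" f "\<lambda>_. s + 1" y] hdeg_le y \<open>finite f\<close> by blast
qed

lemma vertex_of_hdeg_Suc:
  assumes F: "F \<subseteq> E" "\<forall>g\<in>F. s \<le> card g" and s: "2 \<le> s" and maxdeg: "\<Delta> + 1 = s * s"
    and V: "card V = s * s" and y: "y \<in> V" "hdeg F y = s + 1"
  shows "\<forall>g\<in>star F y. card g = s" "\<forall>z\<in>V - {y}. sec2_adj F y z"
proof -
  have "(s + 1) * (s - 1) = \<Delta>"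
    using maxdeg s by (cases s) (auto simp: algebra_simps)
  then have "(\<Sum>g\<in>star F y. s - 1) = \<Delta>"
    using y(2) by (simp add: hdeg_eq_card_star)
  moreover have "(\<Sum>g\<in>star F y. s - 1) \<le> (\<Sum>g\<in>star F y. card g - 1)"
    using F by (intro sum_mono) (auto simp: star_def)
  moreover have "(\<Sum>g\<in>star F y. card g - 1) = sec2_deg V F y"
    using sec2_deg_eq_sum[OF F(1)] by simp
  moreover have "sec2_deg V F y \<le> \<Delta>"
    using sec2_deg_le_maxdeg[OF F(1) y(1)] .
  ultimately have deg: "sec2_deg V F y = \<Delta>"
    and sums: "(\<Sum>g\<in>star F y. s - 1) = (\<Sum>g\<in>star F y. card g - 1)"
    by linarith+
  show "\<forall>g\<in>star F y. card g = s"
  proof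
    fix g assume g: "g \<in> star F y"
    have "s - 1 = card g - 1"
      using sum_mono_inv[OF sums _ g finite_star[OF F(1)]] F(2) by (auto simp: star_def diff_le_mono)
    moreover have "2 \<le> card g"
      using g F(1) card_edge_ge_2 by (auto simp: star_def)
    ultimately show "card g = s"
      using s by linarith
  qed
  have "{z\<in>V. sec2_adj F y z} = V - {y}"
  proof (rule card_subset_eq)
    show "finite (V - {y})"
      using finite_V by blast
    show "{z\<in>V. sec2_adj F y z} \<subseteq> V - {y}"
      by (auto simp: sec2_adj_def)
    show "card {z\<in>V. sec2_adj F y z} = card (V - {y})"
      using deg maxdeg V y(1) finite_V by (simp add: sec2_deg_def card_Diff_singleton)
  qed
  then show "\<forall>z\<in>V - {y}. sec2_adj F y z"
    by blast
qed

lemma sec2_deg_ge_off_edge: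
  assumes F: "F \<subseteq> E" "e \<in> F" and min: "\<forall>g\<in>F. card e \<le> card g"
    and z: "z \<notin> e" and adj: "\<forall>y\<in>e. sec2_adj F y z"
    and h: "h \<in> star F z" "h \<inter> e = {}"
  shows "(card h - 1) + card e * (card e - 1) \<le> sec2_deg V F z"
proof -
  have "\<forall>y\<in>e. \<exists>g. g \<in> F \<and> y \<in> g \<and> z \<in> g"
    using adj by (auto simp: sec2_adj_def)
  then obtain G where G: "\<And>y. y \<in> e \<Longrightarrow> G y \<in> F \<and> y \<in> G y \<and> z \<in> G y"
    by metis
  have "inj_on G e"
  proof
    fix y1 y2 assume y: "y1 \<in> e" "y2 \<in> e" "G y1 = G y2"
    show "y1 = y2"
    proof (rule ccontr)
      assume "y1 \<noteq> y2"
      then have "G y1 = e"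
        using edges_eq_if_two_common[of "G y1" e y1 y2] G y F by auto
      then show False
        using G y(1) z by auto
    qed
  qed
  have "h \<notin> G ` e"
    using G h(2) by blast
  have "finite e"
    using F finite_edge by blast
  have "card e * (card e - 1) = (\<Sum>y\<in>e. card e - 1)"
    by simp
  also have "\<dots> \<le> (\<Sum>y\<in>e. card (G y) - 1)"
    using G min by (intro sum_mono diff_le_mono) blast
  finally have "(card h - 1) + card e * (card e - 1) \<le> (card h - 1) + (\<Sum>y\<in>e. card (G y) - 1)"
    by simp
  also have "\<dots> = (\<Sum>g\<in>insert h (G ` e). card g - 1)"
    using \<open>h \<notin> G ` e\<close> \<open>inj_on G e\<close> \<open>finite e\<close> by (simp add: sum.reindex)
  also have "\<dots> \<le> (\<Sum>g\<in>star F z. card g - 1)"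
    using G h(1) finite_star[OF F(1)] by (intro sum_mono2) (auto simp: star_def)
  also have "\<dots> = sec2_deg V F z"
    using sec2_deg_eq_sum[OF F(1)] by simp
  finally show ?thesis .
qed

lemma full_min_edge_vertex:
  assumes F: "F \<subseteq> E" "e \<in> F" and min: "\<forall>g\<in>F. card e \<le> card g"
    and maxdeg: "\<Delta> + 1 = card e * card e" and V: "card V = card e * card e"
    and full: "card (edge_nbrs F e) = card e * card e" and y: "y \<in> e"
  shows "\<forall>g\<in>star F y. card g = card e" "\<forall>z\<in>V - {y}. sec2_adj F y z"
proof -
  have "e \<in> E"
    using F by blast
  then have "2 \<le> card e" "e \<subseteq> V"
    by (rule card_edge_ge_2, rule edge_subset)
  then have "y \<in> V"
    using y by blast
  moreover have "hdeg F y = card e + 1"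
    by (rule hdeg_eq_Suc_if_full_edge[OF F(1) min maxdeg F(2) refl full y])
  ultimately show "\<forall>g\<in>star F y. card g = card e" "\<forall>z\<in>V - {y}. sec2_adj F y z"
    using vertex_of_hdeg_Suc[OF F(1) min \<open>2 \<le> card e\<close> maxdeg V] by blast+
qed

lemma card_eq_if_full_min_edge:
  assumes F: "F \<subseteq> E" "e \<in> F" and min: "\<forall>g\<in>F. card e \<le> card g"
    and maxdeg: "\<Delta> + 1 = card e * card e" and V: "card V = card e * card e"
    and full: "card (edge_nbrs F e) = card e * card e" and h: "h \<in> F"
  shows "card h = card e"
proof (cases "h \<inter> e = {}")
  case False
  then obtain y where "y \<in> h" "y \<in> e"
    by blast
  then show ?thesis
    using full_min_edge_vertex(1)[OF F min maxdeg V full] h by (auto simp: star_def)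
next
  case True
  have "2 \<le> card h" "h \<subseteq> V"
    using h F(1) card_edge_ge_2 edge_subset by auto
  then have "h \<noteq> {}"
    by auto
  then obtain z where z: "z \<in> h" "z \<in> V"
    using \<open>h \<subseteq> V\<close> by blast
  have "z \<notin> e"
    using True z by blast
  then have "\<forall>y\<in>e. sec2_adj F y z"
    using full_min_edge_vertex(2)[OF F min maxdeg V full] z by blast
  then have "(card h - 1) + card e * (card e - 1) \<le> sec2_deg V F z"
    using sec2_deg_ge_off_edge[OF F min \<open>z \<notin> e\<close>] z(1) h True by (simp add: star_def)
  also have "\<dots> \<le> \<Delta>"
    using sec2_deg_le_maxdeg[OF F(1) z(2)] .
  finally have "card h \<le> card e"
    using maxdeg \<open>2 \<le> card h\<close> by (cases "card e") (auto simp: algebra_simps)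
  then show ?thesis
    using min h by (simp add: le_antisym)
qed

lemma card_star_meeting_le:
  assumes "F \<subseteq> E" "finite g" "y \<notin> g"
  shows "card {h\<in>star F y. h \<inter> g \<noteq> {}} \<le> card g"
proof -
  have "{h\<in>star F y. h \<inter> g \<noteq> {}} = (\<Union>x\<in>g. {h\<in>star F y. x \<in> h})"
    by blast
  also have "card \<dots> \<le> (\<Sum>x\<in>g. card {h\<in>star F y. x \<in> h})"
    using assms(2) by (rule card_UN_le)
  also have "\<dots> \<le> (\<Sum>x\<in>g. 1)"
  proof (intro sum_mono)
    fix x assume "x \<in> g"
    then have "x \<noteq> y"
      using assms(3) by blast
    then have "\<forall>h1\<in>{h\<in>star F y. x \<in> h}. \<forall>h2\<in>{h\<in>star F y. x \<in> h}. h1 = h2"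
      using assms(1) edges_eq_if_two_common unfolding star_def by blast
    then show "card {h\<in>star F y. x \<in> h} \<le> 1"
      using card_le_Suc0_iff_eq[of "{h\<in>star F y. x \<in> h}"] finite_star[OF assms(1), of y] by simp
  qed
  finally show ?thesis by simp
qed

context
  fixes F :: "'a set set" and s :: nat and e :: "'a set"
  assumes F_sub: "F \<subseteq> E" and card_F: "\<forall>g\<in>F. card g = s"
    and maxdeg_eq: "\<Delta> + 1 = s * s" and card_V: "card V = s * s"
    and e: "e \<in> F" and full_e: "card (edge_nbrs F e) = s * s"
begin

lemma min_card_F: "\<forall>g\<in>F. s \<le> card g"
  using card_F by simp

lemma two_le_s: "2 \<le> s"
  using card_edge_ge_2[of e] e F_sub card_F by auto

lemma uniform_full_edge_vertex:
  assumes "f \<in> F" "card (edge_nbrs F f) = s * s" "y \<in> f"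
  shows "hdeg F y = s + 1" "\<forall>z\<in>V - {y}. sec2_adj F y z"
proof -
  show hdeg: "hdeg F y = s + 1"
    using hdeg_eq_Suc_if_full_edge[OF F_sub min_card_F maxdeg_eq assms(1)
        bspec[OF card_F assms(1)] assms(2,3)] .
  have "f \<in> E"
    using F_sub assms(1) by blast
  then have "y \<in> V"
    using edge_subset assms(3) by blast
  then show "\<forall>z\<in>V - {y}. sec2_adj F y z"
    using vertex_of_hdeg_Suc(2)[OF F_sub min_card_F two_le_s maxdeg_eq card_V _ hdeg] by blast
qed

lemma disjoint_edges_through_e:
  obtains a b y1 y2 where "a \<in> F" "b \<in> F" "y1 \<in> a \<inter> e" "y2 \<in> b \<inter> e" "y1 \<noteq> y2"
    "a \<inter> b = {}"
proof -
  have "e \<in> E"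
    using e F_sub by blast
  then have e_fin: "finite e"
    by (rule finite_edge)
  have "\<not> card e \<le> Suc 0"
    using card_F e two_le_s by simp
  then obtain y1 y2 where y: "y1 \<in> e" "y2 \<in> e" "y1 \<noteq> y2"
    using card_le_Suc0_iff_eq[OF e_fin] by blast
  have "card e < card V"
    using card_F e card_V two_le_s mult_less_mono2[of 1 s s] by simp
  then have "\<not> V \<subseteq> e"
    using e_fin card_mono[of e V] by auto
  then obtain z where z: "z \<in> V" "z \<notin> e"
    by blast
  then have "z \<in> V - {y2}"
    using y(2) by blast
  then have "sec2_adj F y2 z"
    using uniform_full_edge_vertex(2)[OF e full_e y(2)] by blast
  then obtain b where b: "b \<in> F" "y2 \<in> b" "z \<in> b"
    by (auto simp: sec2_adj_def)
  have "b \<noteq> e"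
    using b(3) z(2) by blast
  then have "y1 \<notin> b"
    using edges_eq_if_two_common[of b e y1 y2] b(1,2) y F_sub e by blast
  have "finite b" "card b = s"
    using b(1) F_sub finite_edge card_F by auto
  then have "card {h\<in>star F y1. h \<inter> b \<noteq> {}} \<le> s"
    using card_star_meeting_le[OF F_sub _ \<open>y1 \<notin> b\<close>] by simp
  also have "\<dots> < card (star F y1)"
    using uniform_full_edge_vertex(1)[OF e full_e y(1)] by (simp add: hdeg_eq_card_star)
  finally have "{h\<in>star F y1. h \<inter> b \<noteq> {}} \<noteq> star F y1"
    by (intro notI) simp
  then obtain a where "a \<in> star F y1" "a \<inter> b = {}"
    by blast
  then show ?thesis
    using that[of a b y1 y2] b y by (simp add: star_def)
qed

lemma full_edge_nbr_through_e:
  assumes p: "p \<in> F" "p \<inter> e = {}" "card (edge_nbrs F p) = s * s"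
    and y: "y1 \<in> e" "y2 \<in> e" "y1 \<noteq> y2" and ab: "a \<inter> b = {}"
  obtains q where "q \<in> edge_nbrs F p" "q \<inter> e \<noteq> {}" "q \<notin> {a, b}"
proof -
  have "2 \<le> card p"
    using p(1) F_sub card_edge_ge_2 by blast
  then obtain z where z: "z \<in> p"
    by fastforce
  then have "z \<notin> e"
    using p(2) by blast
  then have "y1 \<in> V - {z}" "y2 \<in> V - {z}"
    using y e F_sub edge_subset by blast+
  then have "sec2_adj F z y1" "sec2_adj F z y2"
    using uniform_full_edge_vertex(2)[OF p(1,3) z] by blast+
  then obtain q1 q2 where q1: "q1 \<in> F" "z \<in> q1" "y1 \<in> q1" and q2: "q2 \<in> F" "z \<in> q2" "y2 \<in> q2"
    by (auto simp: sec2_adj_def)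
  have "q1 \<noteq> e"
    using q1(2) \<open>z \<notin> e\<close> by blast
  then have "y2 \<notin> q1"
    using edges_eq_if_two_common[of q1 e y1 y2] q1 y F_sub e by blast
  then have "q1 \<noteq> q2"
    using q2(3) by blast
  then have "z \<in> a \<inter> b" if "q1 \<in> {a, b}" "q2 \<in> {a, b}"
    using that q1(2) q2(2) by auto
  then obtain q where q: "q \<in> {q1, q2}" "q \<notin> {a, b}"
    using ab by blast
  then have "q \<in> F" "z \<in> q" "q \<inter> e \<noteq> {}"
    using q1 q2 y by auto
  moreover have "q \<noteq> p"
    using \<open>q \<inter> e \<noteq> {}\<close> p(2) by blast
  ultimately have "q \<in> edge_nbrs F p"
    using z by (auto simp: edge_nbrs_def)
  then show ?thesis
    using that \<open>q \<inter> e \<noteq> {}\<close> q(2) by blast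
qed

lemma card_edge_nbrs_off_e_less:
  assumes G: "G \<subseteq> F" "\<forall>q\<in>G. q \<inter> e \<noteq> {} \<longrightarrow> q \<in> {a, b}" and p: "p \<in> F" "p \<inter> e = {}"
    and y: "y1 \<in> e" "y2 \<in> e" "y1 \<noteq> y2" and ab: "a \<inter> b = {}"
  shows "card (edge_nbrs G p) < s * s"
proof -
  have fin: "finite (edge_nbrs F p)"
    using F_sub by (rule finite_edge_nbrs)
  have le: "card (edge_nbrs F p) \<le> s * s"
    using card_edge_nbrs_le_square[OF F_sub min_card_F maxdeg_eq p(1) bspec[OF card_F p(1)]] .
  show ?thesis
  proof (cases "card (edge_nbrs F p) = s * s")
    case True
    then obtain q where q: "q \<in> edge_nbrs F p" "q \<inter> e \<noteq> {}" "q \<notin> {a, b}"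
      using full_edge_nbr_through_e[OF p _ y ab] by blast
    have "q \<notin> G"
      using G(2) q(2,3) by blast
    then have "edge_nbrs G p \<subseteq> edge_nbrs F p - {q}"
      using edge_nbrs_mono[OF G(1)] by (auto simp: edge_nbrs_def)
    then have "card (edge_nbrs G p) \<le> card (edge_nbrs F p - {q})"
      using fin by (intro card_mono) auto
    also have "\<dots> < card (edge_nbrs F p)"
      using fin q(1) by (rule card_Diff1_less)
    finally show ?thesis
      using True by simp
  next
    case False
    have "card (edge_nbrs G p) \<le> card (edge_nbrs F p)"
      using fin edge_nbrs_mono[OF G(1)] by (rule card_mono)
    then show ?thesis
      using False le by linarith
  qed
qed

lemma card_edge_nbrs_Diff_less:
  assumes "q \<in> F" "q \<noteq> e" "q \<inter> e \<noteq> {}"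
  shows "card (edge_nbrs (F - {e}) q) < s * s"
proof -
  have "e \<in> edge_nbrs F q"
    using assms e by (auto simp: edge_nbrs_def)
  then have "card (edge_nbrs (F - {e}) q) < card (edge_nbrs F q)"
    unfolding edge_nbrs_Diff using finite_edge_nbrs[OF F_sub] by (rule card_Diff1_less[rotated])
  also have "\<dots> \<le> s * s"
    using card_edge_nbrs_le_square[OF F_sub min_card_F maxdeg_eq assms(1) bspec[OF card_F assms(1)]] .
  finally show ?thesis .
qed

(* Edges missing e are coloured before those meeting e: an edge missing e with s^2 neighbours
   still has an uncoloured neighbour through e at that stage, and an edge meeting e has e itself
   uncoloured. *)
lemma colouring_off_e_repeating:
  assumes ab: "a \<in> F" "b \<in> F" "y1 \<in> a \<inter> e" "y2 \<in> b \<inter> e" "y1 \<noteq> y2" "a \<inter> b = {}"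
  obtains c where "proper_edge_colouring (F - {e}) c (s * s)" "c a = c b"
proof -
  have "finite F"
    using F_sub finite_E by (rule finite_subset)
  define P where "P = {p\<in>F. p \<inter> e = {}}"
  define Q where "Q = {q\<in>F - {e}. q \<inter> e \<noteq> {}}"
  have "finite P" "finite Q"
    using \<open>finite F\<close> by (auto simp: P_def Q_def)
  have "proper_edge_colouring {a, b} (\<lambda>_. 0) (s * s)"
    using ab(6) two_le_s by (auto simp: proper_edge_colouring_def)
  moreover have "\<forall>p\<in>P. card (edge_nbrs ({a, b} \<union> P) p) < s * s"
  proof
    fix p assume "p \<in> P"
    show "card (edge_nbrs ({a, b} \<union> P) p) < s * s"
    proof (rule card_edge_nbrs_off_e_less)
      show "{a, b} \<union> P \<subseteq> F" "\<forall>q\<in>{a, b} \<union> P. q \<inter> e \<noteq> {} \<longrightarrow> q \<in> {a, b}"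
        using ab(1,2) by (auto simp: P_def)
      show "p \<in> F" "p \<inter> e = {}"
        using \<open>p \<in> P\<close> by (auto simp: P_def)
      show "y1 \<in> e" "y2 \<in> e" "y1 \<noteq> y2" "a \<inter> b = {}"
        using ab(3-6) by auto
    qed
  qed
  ultimately obtain c1 where c1: "proper_edge_colouring ({a, b} \<union> P) c1 (s * s)"
    "\<forall>f\<in>{a, b}. c1 f = 0"
    using proper_edge_colouring_extend[OF \<open>finite P\<close>] by blast
  have "a \<noteq> e" "b \<noteq> e" "e \<noteq> {}"
    using ab(3-6) by blast+
  then have F_minus_e: "{a, b} \<union> P \<union> Q = F - {e}"
    using ab(1,2) e by (auto simp: P_def Q_def)
  have "card (edge_nbrs (F - {e}) q) < s * s" if "q \<in> Q" for q
    using that card_edge_nbrs_Diff_less by (auto simp: Q_def)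
  then obtain c2 where c2: "proper_edge_colouring (F - {e}) c2 (s * s)"
    "\<forall>f\<in>{a, b} \<union> P. c2 f = c1 f"
    using proper_edge_colouring_extend[OF \<open>finite Q\<close> c1(1)] \<open>finite P\<close>
    unfolding F_minus_e by blast
  have "c2 a = c2 b"
    using c1(2) c2(2) by simp
  with c2(1) show ?thesis
    by (rule that)
qed

lemma colouring_of_full_edge: "\<exists>c. proper_edge_colouring F c (s * s)"
proof -
  obtain a b y1 y2 where ab: "a \<in> F" "b \<in> F" "y1 \<in> a \<inter> e" "y2 \<in> b \<inter> e" "y1 \<noteq> y2"
    "a \<inter> b = {}"
    by (rule disjoint_edges_through_e)
  then obtain c where c: "proper_edge_colouring (F - {e}) c (s * s)" "c a = c b"
    by (rule colouring_off_e_repeating)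
  have "a \<noteq> e" "b \<noteq> e" "a \<noteq> b"
    using ab(3-6) by blast+
  then have "a \<in> edge_nbrs F e" "b \<in> edge_nbrs F e"
    using ab(1-4) by (auto simp: edge_nbrs_def)
  then have "\<not> inj_on c (edge_nbrs F e)"
    using c(2) \<open>a \<noteq> b\<close> by (auto simp: inj_on_def)
  then have "card (c ` edge_nbrs F e) < card (edge_nbrs F e)"
    using finite_edge_nbrs[OF F_sub] card_image_le inj_on_iff_eq_card le_neq_implies_less by blast
  then have "card (c ` edge_nbrs F e) < s * s"
    using full_e by simp
  then obtain c' where "proper_edge_colouring F c' (s * s)"
    using proper_edge_colouring_Diff_extend[OF c(1) finite_subset[OF F_sub finite_E] e] by blast
  then show ?thesis
    by blast
qed

end

lemma colouring_if_crowded: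
  assumes F: "F \<subseteq> E" "e \<in> F" and min: "\<forall>g\<in>F. card e \<le> card g"
    and small_V: "card V \<le> card e * card e" and crowded: "\<Delta> < card (edge_nbrs F e)"
  shows "\<exists>c. proper_edge_colouring F c (\<Delta> + 1)"
proof -
  note params = crowded_edge_parameters[OF F min small_V crowded]
  have full: "card (edge_nbrs F e) = card e * card e"
    using card_edge_nbrs_le_square[OF F(1) min params(1) F(2) refl] crowded params(1) by linarith
  have "\<forall>g\<in>F. card g = card e"
    using card_eq_if_full_min_edge[OF F min params full] by blast
  then show ?thesis
    using colouring_of_full_edge[OF F(1) _ params F(2) full] params(1) by simp
qed

lemma exists_colouring_maxdeg_Suc:
  assumes small_vertex_or_large:
      "\<forall>e\<in>E. (\<exists>x0\<in>e. hdeg E x0 \<le> card e) \<or> card V \<le> card e * card e"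
    and "F \<subseteq> E"
  shows "\<exists>c. proper_edge_colouring F c (\<Delta> + 1)"
  using finite_subset[OF \<open>F \<subseteq> E\<close> finite_E] \<open>F \<subseteq> E\<close>
proof (induction F rule: finite_psubset_induct)
  case (psubset F)
  show ?case
  proof (cases "F = {}")
    case True
    then show ?thesis
      by (auto simp: proper_edge_colouring_def)
  next
    case False
    then obtain e where e: "e \<in> F" "\<forall>g\<in>F. card e \<le> card g"
      using ex_has_least_nat[of "\<lambda>g. g \<in> F" _ card] by blast
    obtain c where c: "proper_edge_colouring (F - {e}) c (\<Delta> + 1)"
      using psubset.IH[of "F - {e}"] psubset.prems e(1) by blast
    consider (sparse) "card (edge_nbrs F e) \<le> \<Delta>"
      | (crowded) "\<Delta> < card (edge_nbrs F e)" "card V \<le> card e * card e"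
      using small_vertex_or_large card_edge_nbrs_le_maxdeg[OF psubset.prems e]
        hdeg_mono[OF psubset.prems] e(1) psubset.prems
      by (meson le_trans not_le subsetD)
    then show ?thesis
    proof cases
      case sparse
      have "card (c ` edge_nbrs F e) \<le> card (edge_nbrs F e)"
        using finite_edge_nbrs[OF psubset.prems] by (rule card_image_le)
      then have "card (c ` edge_nbrs F e) < \<Delta> + 1"
        using sparse by linarith
      then show ?thesis
        using proper_edge_colouring_Diff_extend[OF c psubset.hyps e(1)] by blast
    next
      case crowded
      then show ?thesis
        using colouring_if_crowded[OF psubset.prems e] by blast
    qed
  qed
qed

end

lemma square_card_ge_if_antirank_ge:
  assumes "finite E'" "e \<in> E'" "ereal (sqrt (real n)) \<le> antirank E'"
  shows "n \<le> card e * card e"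
proof -
  have "Min (card ` E') \<le> card e"
    using assms(1,2) by simp
  then have "antirank E' \<le> ereal (real (card e))"
    using assms(2) by (auto simp: antirank_def)
  with assms(3) have "ereal (sqrt (real n)) \<le> ereal (real (card e))"
    by (rule order_trans)
  then have "sqrt (real n) \<le> real (card e)"
    by simp
  then have "real n \<le> real (card e) ^ 2"
    by (rule sqrt_le_D)
  then show ?thesis
    by (simp add: power2_eq_square flip: of_nat_mult)
qed

theorem theorem5p3:
  fixes V :: "'a set" and E E' E'' :: "'a set set" and n :: nat
  assumes "hypergraph V E"
    and "linear_hg E"
    and "loopless E"
    and "card V = n"
    and "E = E' \<union> E''" and "E' \<inter> E'' = {}"
    and "ereal (sqrt (real n)) \<le> antirank E'"
    and "\<forall>e\<in>E''. real (card e) < sqrt (real n)"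
    and "\<forall>e\<in>E''. \<exists>x0\<in>e. hdeg E x0 \<le> card e"
  shows "chromatic_index E \<le> sec2_maxdeg V E + 1"
proof -
  interpret linear_hypergraph V E
    using assms(1-3) by unfold_locales
  have "(\<exists>x0\<in>e. hdeg E x0 \<le> card e) \<or> card V \<le> card e * card e" if "e \<in> E" for e
  proof (cases "e \<in> E''")
    case False
    then have "n \<le> card e * card e"
      using that assms(5) finite_E square_card_ge_if_antirank_ge[OF _ _ assms(7)] by simp
    with assms(4) show ?thesis
      by simp
  qed (use assms(9) in blast)
  then obtain c where "proper_edge_colouring E c (sec2_maxdeg V E + 1)"
    using exists_colouring_maxdeg_Suc[of E] by blast
  then show ?thesis
    unfolding chromatic_index_def by (blast intro: Least_le)
qed

end
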